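(* Let $d\ge1$, let $\nu_0:\mathbb{Z}^d\to[0,\infty)$ have finite support, and let $x_1,x_2,\ldots\in\mathbb{Z}^d$ be a sequence in which every $x\in\mathbb{Z}^d$ appears infinitely often. Let $u_k(x)$ be the total mass emitted by $x$ and $\nu_k(x)$ the mass present at $x$ after starting from $\nu_0$ and toppling $x_1,\ldots,x_k$ in succession. Then $u_k\uparrow u$ and $\nu_k\to\nu$ pointwise, where $u$ is finite and $\nu\le 1$. Moreover, the limits $u$ and $\nu$ do not depend on the choice of the sequence $(x_k)$.
   Context: Divisible sandpile: a mass distribution is a function $\mu:\mathbb{Z}^d\to[0,\infty)$. Toppling a site $x$ replaces $\mu$ by $\mu+\alpha\,\Delta\delta_x$ where $\alpha=\max(\mu(x)-1,0)$; i.e. if $\mu(x)>1$, the site keeps mass $1$ and sends mass $(\mu(x)-1)/(2d)$ to each of its $2d$ lattice neighbors, and if $\mu(x)\le1$ nothing happens. The mass emitted by $x$ in that toppling is $\alpha$. Here $\Delta f(x)=\frac{1}{2d}\sum_{y\sim x}f(y)-f(x)$ is the discrete Laplacian, the sum over the $2d$ lattice neighbors of $x$, and $\delta_x$ is the indicator of $\{x\}$. *)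

theory Defs
  imports "HOL-Analysis.Analysis"
begin

text \<open>The lattice Z^d is modelled as int ^ 'd for a finite index type 'd, d = CARD('d) >= 1.\<close>

definition lattice_nbrs :: "int ^ 'd \<Rightarrow> (int ^ 'd) set" where
  "lattice_nbrs x = {y. (\<Sum>i\<in>UNIV. \<bar>y $ i - x $ i\<bar>) = 1}"

definition lattice_lap :: "(int ^ 'd \<Rightarrow> real) \<Rightarrow> int ^ 'd \<Rightarrow> real" where
  "lattice_lap f x = (\<Sum>y\<in>lattice_nbrs x. f y) / (2 * real CARD('d)) - f x"

definition delta_at :: "int ^ 'd \<Rightarrow> int ^ 'd \<Rightarrow> real" where
  "delta_at x = (\<lambda>y. if y = x then 1 else 0)"

definition emitted_mass :: "(int ^ 'd \<Rightarrow> real) \<Rightarrow> int ^ 'd \<Rightarrow> real" where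
  "emitted_mass \<mu> x = max (\<mu> x - 1) 0"

definition topple :: "(int ^ 'd \<Rightarrow> real) \<Rightarrow> int ^ 'd \<Rightarrow> (int ^ 'd \<Rightarrow> real)" where
  "topple \<mu> x = (\<lambda>y. \<mu> y + emitted_mass \<mu> x * lattice_lap (delta_at x) y)"

text \<open>Mass after toppling x_1..x_k (the sequence is indexed from 0: x_{i+1} = xs i).\<close>
fun sp_mass :: "(int ^ 'd \<Rightarrow> real) \<Rightarrow> (nat \<Rightarrow> int ^ 'd) \<Rightarrow> nat \<Rightarrow> (int ^ 'd \<Rightarrow> real)" where
  "sp_mass \<nu>0 xs 0 = \<nu>0"
| "sp_mass \<nu>0 xs (Suc k) = topple (sp_mass \<nu>0 xs k) (xs k)"

fun sp_odometer :: "(int ^ 'd \<Rightarrow> real) \<Rightarrow> (nat \<Rightarrow> int ^ 'd) \<Rightarrow> nat \<Rightarrow> (int ^ 'd \<Rightarrow> real)" where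
  "sp_odometer \<nu>0 xs 0 = (\<lambda>y. 0)"
| "sp_odometer \<nu>0 xs (Suc k) = (\<lambda>y. sp_odometer \<nu>0 xs k y +
      (if y = xs k then emitted_mass (sp_mass \<nu>0 xs k) (xs k) else 0))"

end

theory Submission
  imports Defs
begin

(*
  Write u_k for the odometer after k topplings. Since a toppling at x with
  emitted mass a adds a * Delta(delta_x) to the mass, the mass is always
  nu_k = nu_0 + Delta u_k.  Call w "admissible" if w >= 0 and
  nu_0 + Delta w <= 1 everywhere (a stable outcome).  By induction on k,
  every odometer u_k lies below every admissible w.  The pointwise infimum U
  of all admissible functions is itself admissible, provided one exists; for
  finitely supported nu_0 we construct one explicitly from a function of a
  single coordinate.  For a sequence visiting every site infinitely often,
  u_k increases to a limit L <= U, and L is admissible because the mass at a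
  site is at most 1 right after it topples.  Hence L = U, independently of
  the sequence, and nu_k -> nu_0 + Delta U <= 1.
*)

subsection \<open>Toppling as a Laplacian update of the odometer\<close>

lemma lattice_lap_add_scaled:
  "lattice_lap (\<lambda>y. f y + c * g y) x = lattice_lap f x + c * lattice_lap g x"
  unfolding lattice_lap_def
  by (simp add: sum.distrib sum_distrib_left add_divide_distrib algebra_simps)

lemma lattice_lap_plus_self_mono:
  assumes "\<And>y. f y \<le> g y"
  shows "lattice_lap f x + f x \<le> lattice_lap g x + g x"
  unfolding lattice_lap_def using assms by (simp add: divide_right_mono sum_mono)

lemma lattice_lap_tendsto:
  assumes "\<And>y. (\<lambda>k. f k y) \<longlonglongrightarrow> g y"
  shows "(\<lambda>k. lattice_lap (f k) x) \<longlonglongrightarrow> lattice_lap g x"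
  unfolding lattice_lap_def by (intro tendsto_intros assms) simp

lemma emitted_mass_nonneg: "emitted_mass \<mu> x \<ge> 0"
  by (simp add: emitted_mass_def)

lemma lattice_lap_delta_self: "lattice_lap (delta_at x) x = -1"
proof -
  have "x \<notin> lattice_nbrs x" by (simp add: lattice_nbrs_def)
  then have "(\<Sum>y\<in>lattice_nbrs x. delta_at x y) = 0"
    by (intro sum.neutral) (auto simp: delta_at_def)
  then show ?thesis by (simp add: lattice_lap_def delta_at_def)
qed

lemma topple_at_site_le_1: "topple \<mu> x x \<le> 1"
  by (simp add: topple_def lattice_lap_delta_self emitted_mass_def)

lemma sp_mass_eq_lap_odometer:
  "sp_mass \<nu>0 xs k y = \<nu>0 y + lattice_lap (sp_odometer \<nu>0 xs k) y"
proof (induction k arbitrary: y)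
  case 0
  then show ?case by (simp add: lattice_lap_def)
next
  case (Suc k)
  have "sp_odometer \<nu>0 xs (Suc k) = (\<lambda>y. sp_odometer \<nu>0 xs k y
          + emitted_mass (sp_mass \<nu>0 xs k) (xs k) * delta_at (xs k) y)"
    by (auto simp: delta_at_def)
  then show ?case by (simp add: lattice_lap_add_scaled topple_def Suc)
qed

lemma sp_odometer_incseq: "incseq (\<lambda>k. sp_odometer \<nu>0 xs k x)"
  by (rule incseq_SucI) (simp add: emitted_mass_nonneg)

subsection \<open>Admissible functions and the least action principle\<close>

definition admissible :: "(int ^ 'd \<Rightarrow> real) \<Rightarrow> (int ^ 'd \<Rightarrow> real) \<Rightarrow> bool" where
  "admissible \<nu>0 w \<longleftrightarrow> (\<forall>x. 0 \<le> w x) \<and> (\<forall>x. \<nu>0 x + lattice_lap w x \<le> 1)"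

lemma sp_odometer_le_admissible:
  assumes w: "admissible \<nu>0 w"
  shows "sp_odometer \<nu>0 xs k y \<le> w y"
proof (induction k arbitrary: y)
  case 0
  then show ?case using w by (simp add: admissible_def)
next
  case (Suc k)
  let ?u = "sp_odometer \<nu>0 xs k" and ?x = "xs k"
  show ?case
  proof (cases "y = ?x")
    case True
    text \<open>The toppled site's new odometer is the maximum of its old value and
      \<open>\<nu>0 + (neighbour average of u) - 1\<close>; both are at most \<open>w ?x\<close>.\<close>
    have "lattice_lap ?u ?x + ?u ?x \<le> lattice_lap w ?x + w ?x"
      by (rule lattice_lap_plus_self_mono) (rule Suc)
    moreover have "\<nu>0 ?x + lattice_lap w ?x \<le> 1" using w by (simp add: admissible_def)
    moreover have "?u ?x \<le> w ?x" by (rule Suc)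
    ultimately show ?thesis using True
      by (simp add: emitted_mass_def sp_mass_eq_lap_odometer)
  qed (use Suc in simp)
qed

lemma least_admissible_exists:
  assumes "admissible \<nu>0 W"
  shows "\<exists>U. admissible \<nu>0 U \<and> (\<forall>w x. admissible \<nu>0 w \<longrightarrow> U x \<le> w x)"
proof -
  define U where "U = (\<lambda>x. Inf {w x | w. admissible \<nu>0 w})"
  have U_le: "U x \<le> w x" if "admissible \<nu>0 w" for w x
    unfolding U_def
    by (rule cInf_lower) (use that in \<open>auto intro!: bdd_belowI[of _ 0] simp: admissible_def\<close>)
  have U_ge: "c \<le> U x" if "\<And>w. admissible \<nu>0 w \<Longrightarrow> c \<le> w x" for c x
    unfolding U_def by (rule cInf_greatest) (use assms that in blast)+
  have "admissible \<nu>0 U"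
    unfolding admissible_def
  proof (intro conjI allI)
    fix x show "0 \<le> U x" by (rule U_ge) (simp add: admissible_def)
  next
    fix x
    have "\<nu>0 x + (lattice_lap U x + U x) - 1 \<le> U x"
    proof (rule U_ge)
      fix w assume w: "admissible \<nu>0 w"
      have "lattice_lap U x + U x \<le> lattice_lap w x + w x"
        by (rule lattice_lap_plus_self_mono) (rule U_le[OF w])
      moreover have "\<nu>0 x + lattice_lap w x \<le> 1" using w by (simp add: admissible_def)
      ultimately show "\<nu>0 x + (lattice_lap U x + U x) - 1 \<le> w x" by simp
    qed
    then show "\<nu>0 x + lattice_lap U x \<le> 1" by simp
  qed
  with U_le show ?thesis by blast
qed

text \<open>If every site is toppled infinitely often, the limiting outcome is stable:
  otherwise the mass at some site would stay above 1 from some time on,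
  although it drops to at most 1 whenever that site topples.\<close>
lemma limit_outcome_stable:
  assumes lim: "\<And>y. (\<lambda>k. sp_odometer \<nu>0 xs k y) \<longlonglongrightarrow> L y"
    and good: "\<forall>x. infinite {k. xs k = x}"
  shows "\<nu>0 y + lattice_lap L y \<le> 1"
proof (rule ccontr)
  assume "\<not> ?thesis"
  moreover have "(\<lambda>k. sp_mass \<nu>0 xs k y) \<longlonglongrightarrow> \<nu>0 y + lattice_lap L y"
    unfolding sp_mass_eq_lap_odometer by (intro tendsto_intros lattice_lap_tendsto lim)
  ultimately have "eventually (\<lambda>k. 1 < sp_mass \<nu>0 xs k y) sequentially"
    by (intro order_tendstoD(1)) auto
  then obtain N where N: "\<And>k. k \<ge> N \<Longrightarrow> 1 < sp_mass \<nu>0 xs k y"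
    unfolding eventually_sequentially by blast
  from good obtain k where k: "xs k = y" "k \<ge> N"
    unfolding infinite_nat_iff_unbounded_le by blast
  have "sp_mass \<nu>0 xs (Suc k) y \<le> 1" using k topple_at_site_le_1[of _ y] by simp
  with N[of "Suc k"] k show False by simp
qed

lemma sp_odometer_tendsto_least_admissible:
  assumes U: "admissible \<nu>0 U" "\<forall>w x. admissible \<nu>0 w \<longrightarrow> U x \<le> w x"
    and good: "\<forall>x. infinite {k. xs k = x}"
  shows "(\<lambda>k. sp_odometer \<nu>0 xs k x) \<longlonglongrightarrow> U x"
proof -
  let ?u = "sp_odometer \<nu>0 xs"
  define L where "L = (\<lambda>y. SUP k. ?u k y)"
  have bounded: "bdd_above (range (\<lambda>k. ?u k y))" for y
    by (intro bdd_aboveI[of _ "U y"]) (auto intro: sp_odometer_le_admissible[OF U(1)])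
  have lim: "(\<lambda>k. ?u k y) \<longlonglongrightarrow> L y" for y
    unfolding L_def by (rule LIMSEQ_incseq_SUP[OF bounded sp_odometer_incseq])
  have L_le_U: "L y \<le> U y" for y
    unfolding L_def using sp_odometer_le_admissible[OF U(1)] by (intro cSUP_least) auto
  have "?u 0 y \<le> L y" for y
    unfolding L_def by (rule cSUP_upper[OF _ bounded]) simp
  then have "admissible \<nu>0 L"
    using limit_outcome_stable[OF lim good] by (simp add: admissible_def)
  then have "L = U" using L_le_U U(2) by (intro ext antisym) blast+
  with lim show ?thesis by simp
qed

subsection \<open>Neighbours in the lattice\<close>

lemma sum_nonneg_int_eq_1:
  fixes f :: "'a \<Rightarrow> int"
  assumes "finite A" "\<And>i. i \<in> A \<Longrightarrow> f i \<ge> 0" "sum f A = 1"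
  shows "\<exists>i\<in>A. f i = 1 \<and> (\<forall>j\<in>A - {i}. f j = 0)"
proof -
  obtain i where i: "i \<in> A" "f i \<noteq> 0"
    using assms(3) by (metis sum.neutral zero_neq_one)
  have split: "f i + sum f (A - {i}) = 1"
    using assms(1,3) i(1) sum.remove by metis
  have "sum f (A - {i}) \<ge> 0" using assms(2) by (intro sum_nonneg) auto
  with split i assms(2) have "f i = 1" "sum f (A - {i}) = 0" by force+
  moreover have "\<forall>j\<in>A - {i}. f j = 0"
    using \<open>sum f (A - {i}) = 0\<close> assms(1,2) sum_nonneg_eq_0_iff[of "A - {i}" f] by auto
  ultimately show ?thesis using i(1) by blast
qed

lemma axis_one_nth: "axis i (1::int) $ j = (if j = i then 1 else 0)"
  by (simp add: axis_def)

lemma lattice_nbrs_eq: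
  "lattice_nbrs x = range (\<lambda>i. x + axis i 1) \<union> range (\<lambda>i. x - axis i 1)"
proof (intro equalityI subsetI)
  fix y assume "y \<in> lattice_nbrs x"
  then obtain i where "\<bar>y $ i - x $ i\<bar> = 1" and "\<And>j. j \<noteq> i \<Longrightarrow> y $ j = x $ j"
    using sum_nonneg_int_eq_1[of UNIV "\<lambda>j. \<bar>y $ j - x $ j\<bar>"]
    by (auto simp: lattice_nbrs_def)
  then have "y = x + axis i 1 \<or> y = x - axis i 1"
    by (auto simp: vec_eq_iff axis_one_nth abs_eq_iff)
  then show "y \<in> range (\<lambda>i. x + axis i 1) \<union> range (\<lambda>i. x - axis i 1)" by blast
next
  fix y assume "y \<in> range (\<lambda>i. x + axis i 1) \<union> range (\<lambda>i. x - axis i 1)"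
  then obtain i where "y = x + axis i 1 \<or> y = x - axis i 1" by blast
  then have "\<And>j. \<bar>y $ j - x $ j\<bar> = (if j = i then 1 else 0)"
    by (auto simp: axis_one_nth)
  then show "y \<in> lattice_nbrs x" by (simp add: lattice_nbrs_def)
qed

lemma sum_lattice_nbrs:
  "(\<Sum>y\<in>lattice_nbrs x. g y) = (\<Sum>i\<in>UNIV. g (x + axis i 1)) + (\<Sum>i\<in>UNIV. g (x - axis i 1))"
proof -
  have inj_plus: "inj (\<lambda>i. x + axis i (1::int))" and inj_minus: "inj (\<lambda>i. x - axis i (1::int))"
    by (auto intro!: injI simp: vec_eq_iff axis_one_nth split: if_splits)
  have "x + axis i (1::int) \<noteq> x - axis j 1" for i j
  proof
    assume "x + axis i (1::int) = x - axis j 1"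
    then have "(x + axis i (1::int)) $ i = (x - axis j 1) $ i" by simp
    then show False by (auto simp: axis_one_nth split: if_splits)
  qed
  then have "range (\<lambda>i. x + axis i 1) \<inter> range (\<lambda>i. x - axis i 1) = {}" by auto
  then show ?thesis
    unfolding lattice_nbrs_eq
    by (subst sum.union_disjoint) (auto simp: sum.reindex[OF inj_plus] sum.reindex[OF inj_minus])
qed

lemma lattice_lap_coordinate:
  fixes \<phi> :: "int \<Rightarrow> real" and i0 :: "'d::finite" and x :: "int ^ 'd"
  shows "lattice_lap (\<lambda>y. \<phi> (y $ i0)) x
     = (\<phi> (x $ i0 + 1) + \<phi> (x $ i0 - 1) - 2 * \<phi> (x $ i0)) / (2 * real CARD('d))"
proof -
  have if_sum: "(\<Sum>i\<in>UNIV. if i = i0 then a else b) = real CARD('d) * b + (a - b)" for a b :: real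
  proof -
    have "(\<Sum>i\<in>UNIV. if i = i0 then a else b) = (\<Sum>i\<in>UNIV. b + (if i = i0 then a - b else 0))"
      by (rule sum.cong) auto
    then show ?thesis by (simp add: sum.distrib)
  qed
  have "(\<Sum>i\<in>UNIV. \<phi> ((x + axis i 1) $ i0)) = (\<Sum>i\<in>UNIV. if i = i0 then \<phi> (x $ i0 + 1) else \<phi> (x $ i0))"
       "(\<Sum>i\<in>UNIV. \<phi> ((x - axis i 1) $ i0)) = (\<Sum>i\<in>UNIV. if i = i0 then \<phi> (x $ i0 - 1) else \<phi> (x $ i0))"
    by (auto intro!: sum.cong simp: axis_one_nth)
  then show ?thesis
    unfolding lattice_lap_def sum_lattice_nbrs if_sum by (simp add: field_simps)
qed

subsection \<open>Existence of an admissible function\<close>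

lemma dist_sum_second_difference:
  fixes P :: "int set"
  assumes "finite P"
  shows "(\<Sum>s\<in>P. \<bar>t + 1 - s\<bar>) + (\<Sum>s\<in>P. \<bar>t - 1 - s\<bar>) - 2 * (\<Sum>s\<in>P. \<bar>t - s\<bar>)
       = (if t \<in> P then 2 else 0)"
proof -
  have "(\<Sum>s\<in>P. \<bar>t + 1 - s\<bar>) + (\<Sum>s\<in>P. \<bar>t - 1 - s\<bar>) - 2 * (\<Sum>s\<in>P. \<bar>t - s\<bar>)
      = (\<Sum>s\<in>P. \<bar>t + 1 - s\<bar> + \<bar>t - 1 - s\<bar> - 2 * \<bar>t - s\<bar>)"
    by (simp add: sum.distrib sum_subtractf sum_distrib_left)
  also have "\<dots> = (\<Sum>s\<in>P. if s = t then 2 else 0)"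
    by (intro sum.cong refl) (auto simp: abs_if)
  also have "\<dots> = (if t \<in> P then 2 else 0)"
    using assms by simp
  finally show ?thesis .
qed

lemma kinked_parabola:
  fixes P :: "int set" and c :: real
  assumes "finite P" "c \<ge> 0"
  shows "\<exists>\<phi>. (\<forall>t. 0 \<le> \<phi> t) \<and>
           (\<forall>t. \<phi> (t + 1) + \<phi> (t - 1) - 2 * \<phi> t = 2 - c * (if t \<in> P then 2 else 0))"
proof -
  define h where "h = (\<lambda>t. real_of_int (\<Sum>s\<in>P. \<bar>t - s\<bar>))"
  define n where "n = real (card P)"
  define Q where "Q = real_of_int (\<Sum>s\<in>P. \<bar>s\<bar>)"
  define \<phi> where "\<phi> = (\<lambda>t. (real_of_int t)\<^sup>2 - c * h t + c * Q + (c * n)\<^sup>2)"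
  have "\<phi> t \<ge> 0" for t
  proof -
    have "(\<Sum>s\<in>P. \<bar>t - s\<bar>) \<le> (\<Sum>s\<in>P. \<bar>t\<bar> + \<bar>s\<bar>)"
      by (intro sum_mono abs_triangle_ineq4)
    then have "real_of_int (\<Sum>s\<in>P. \<bar>t - s\<bar>) \<le> real_of_int (int (card P) * \<bar>t\<bar> + (\<Sum>s\<in>P. \<bar>s\<bar>))"
      by (simp only: of_int_le_iff sum.distrib) simp
    then have "h t \<le> n * \<bar>real_of_int t\<bar> + Q"
      unfolding h_def n_def Q_def by simp
    then have "c * h t \<le> c * (n * \<bar>real_of_int t\<bar> + Q)"
      using assms(2) by (rule mult_left_mono)
    moreover have "(real_of_int t)\<^sup>2 - c * n * \<bar>real_of_int t\<bar> + (c * n)\<^sup>2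
        = (\<bar>real_of_int t\<bar> - c * n / 2)\<^sup>2 + 3 / 4 * (c * n)\<^sup>2"
      by (simp add: power2_eq_square algebra_simps)
    moreover have "c * (n * \<bar>real_of_int t\<bar> + Q) = c * n * \<bar>real_of_int t\<bar> + c * Q"
      by (simp add: algebra_simps)
    moreover have "0 \<le> (\<bar>real_of_int t\<bar> - c * n / 2)\<^sup>2 + 3 / 4 * (c * n)\<^sup>2"
      by simp
    ultimately show ?thesis
      unfolding \<phi>_def by linarith
  qed
  moreover have "\<phi> (t + 1) + \<phi> (t - 1) - 2 * \<phi> t = 2 - c * (if t \<in> P then 2 else 0)" for t
  proof -
    have "h (t + 1) + h (t - 1) - 2 * h t = real_of_int ((\<Sum>s\<in>P. \<bar>t + 1 - s\<bar>)
            + (\<Sum>s\<in>P. \<bar>t - 1 - s\<bar>) - 2 * (\<Sum>s\<in>P. \<bar>t - s\<bar>))"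
      unfolding h_def by simp
    also have "\<dots> = (if t \<in> P then 2 else 0)"
      unfolding dist_sum_second_difference[OF assms(1)] by simp
    finally have h_diff: "h (t + 1) + h (t - 1) - 2 * h t = (if t \<in> P then 2 else 0)" .
    have "\<phi> (t + 1) + \<phi> (t - 1) - 2 * \<phi> t
        = ((real_of_int t + 1)\<^sup>2 + (real_of_int t - 1)\<^sup>2 - 2 * (real_of_int t)\<^sup>2)
          - c * (h (t + 1) + h (t - 1) - 2 * h t)"
      unfolding \<phi>_def by (simp add: algebra_simps)
    then show ?thesis
      unfolding h_diff by (simp add: power2_eq_square algebra_simps)
  qed
  ultimately show ?thesis by blast
qed

text \<open>For finitely supported nonnegative initial mass an admissible function
  exists: a kinked parabola in one fixed coordinate, with kinks deep enough to
  absorb the mass at every site of the support.\<close>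
lemma admissible_exists:
  fixes \<nu>0 :: "int ^ 'd \<Rightarrow> real"
  assumes nonneg: "\<forall>x. \<nu>0 x \<ge> 0"
    and fin: "finite {x. \<nu>0 x \<noteq> 0}"
  shows "\<exists>w. admissible \<nu>0 w"
proof -
  define S where "S = {x. \<nu>0 x \<noteq> 0}"
  define i0 :: 'd where "i0 = undefined"
  define M where "M = (\<Sum>x\<in>S. \<nu>0 x)"
  define c where "c = 1 + real CARD('d) * M"
  have M_bound: "\<nu>0 x \<le> M" if "x \<in> S" for x
    unfolding M_def using fin that nonneg by (intro member_le_sum) (auto simp: S_def)
  have "M \<ge> 0" unfolding M_def using nonneg by (simp add: sum_nonneg)
  then have "c \<ge> 1" by (simp add: c_def)
  obtain \<phi> where \<phi>_nonneg: "\<And>t. 0 \<le> \<phi> t"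
    and \<phi>_diff: "\<And>t. \<phi> (t + 1) + \<phi> (t - 1) - 2 * \<phi> t
                      = 2 - c * (if t \<in> (\<lambda>x. x $ i0) ` S then 2 else 0)"
    using kinked_parabola[of "(\<lambda>x. x $ i0) ` S" c] fin \<open>c \<ge> 1\<close> by (auto simp: S_def)
  define w where "w = (\<lambda>y::int ^ 'd. \<phi> (y $ i0))"
  have d_pos: "real CARD('d) \<ge> 1" by (simp add: Suc_leI)
  have lap_w: "lattice_lap w x = (1 - c * (if x $ i0 \<in> (\<lambda>x. x $ i0) ` S then 1 else 0)) / real CARD('d)" for x
    unfolding w_def lattice_lap_coordinate \<phi>_diff by (simp add: field_simps)
  have "\<nu>0 x + lattice_lap w x \<le> 1" for x
  proof (cases "x \<in> S")
    case True
    then have "lattice_lap w x = - M" using d_pos by (simp add: lap_w c_def field_simps)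
    then show ?thesis using M_bound[OF True] by simp
  next
    case False
    then have "\<nu>0 x = 0" by (simp add: S_def)
    moreover have "lattice_lap w x \<le> 1"
      using \<open>c \<ge> 1\<close> d_pos by (auto simp: lap_w divide_le_eq)
    ultimately show ?thesis by simp
  qed
  then have "admissible \<nu>0 w" by (simp add: admissible_def w_def \<phi>_nonneg)
  then show ?thesis by blast
qed

theorem proposition1p2:
  fixes \<nu>0 :: "int ^ 'd \<Rightarrow> real"
  assumes nonneg: "\<forall>x. \<nu>0 x \<ge> 0"
    and fin: "finite {x. \<nu>0 x \<noteq> 0}"
  shows "\<exists>u \<nu> :: int ^ 'd \<Rightarrow> real. (\<forall>x. \<nu> x \<le> 1) \<and>
    (\<forall>xs :: nat \<Rightarrow> int ^ 'd. (\<forall>x. infinite {k. xs k = x}) \<longrightarrow>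
       (\<forall>x. incseq (\<lambda>k. sp_odometer \<nu>0 xs k x) \<and>
            (\<lambda>k. sp_odometer \<nu>0 xs k x) \<longlonglongrightarrow> u x \<and>
            (\<lambda>k. sp_mass \<nu>0 xs k x) \<longlonglongrightarrow> \<nu> x))"
proof -
  obtain U where U: "admissible \<nu>0 U" and least: "\<forall>w x. admissible \<nu>0 w \<longrightarrow> U x \<le> w x"
    using admissible_exists[OF nonneg fin] least_admissible_exists by blast
  show ?thesis
  proof (intro exI conjI allI impI)
    fix x show "\<nu>0 x + lattice_lap U x \<le> 1" using U by (simp add: admissible_def)
  next
    fix xs :: "nat \<Rightarrow> int ^ 'd" and x
    assume good: "\<forall>x. infinite {k. xs k = x}"
    note odometer_lim = sp_odometer_tendsto_least_admissible[OF U least good]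
    show "incseq (\<lambda>k. sp_odometer \<nu>0 xs k x)" by (rule sp_odometer_incseq)
    show "(\<lambda>k. sp_odometer \<nu>0 xs k x) \<longlonglongrightarrow> U x" by (rule odometer_lim)
    show "(\<lambda>k. sp_mass \<nu>0 xs k x) \<longlonglongrightarrow> \<nu>0 x + lattice_lap U x"
      unfolding sp_mass_eq_lap_odometer by (intro tendsto_intros lattice_lap_tendsto odometer_lim)
  qed
qed

end
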